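(* Let $A\in H_n$ and $B\in H_k$ be neither positive semidefinite nor negative semidefinite, with $\|A_+\|_\infty=\|B_+\|_\infty$ and $\|A_-\|_\infty=\|B_-\|_\infty$. Then there exist a positive unital linear map $\Phi:H_n\to H_k$ with $\Phi(A)=B$ and a positive unital linear map $\Phi':H_k\to H_n$ with $\Phi'(B)=A$.
   Context: $H_n$ denotes the $n\times n$ complex Hermitian matrices. A linear map $\Phi:H_n\to H_k$ is positive if it maps positive semidefinite matrices to positive semidefinite matrices and unital if $\Phi(\mathbb{1})=\mathbb{1}$. Every $A\in H_n$ decomposes uniquely as $A=A_+-A_-$ with $A_+,A_-$ positive semidefinite and $A_+A_-=0$. $\|\cdot\|_\infty$ is the operator norm. *)

theory Defs
  imports "HOL-Analysis.Analysis"
begin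

definition conj_transpose :: "complex^'n^'m \<Rightarrow> complex^'m^'n" where
  "conj_transpose A = (\<chi> i j. cnj (A $ j $ i))"

definition hermitian :: "complex^'n^'n \<Rightarrow> bool" where
  "hermitian A \<longleftrightarrow> conj_transpose A = A"

definition quad_form :: "complex^'n^'n \<Rightarrow> complex^'n \<Rightarrow> complex" where
  "quad_form A v = (\<Sum>i\<in>UNIV. \<Sum>j\<in>UNIV. cnj (v $ i) * A $ i $ j * v $ j)"

definition psd :: "complex^'n^'n \<Rightarrow> bool" where
  "psd A \<longleftrightarrow> hermitian A \<and> (\<forall>v. Im (quad_form A v) = 0 \<and> 0 \<le> Re (quad_form A v))"

text \<open>Unique decomposition A = A_+ - A_- with A_+, A_- psd and A_+ A_- = 0.\<close>
definition pos_part :: "complex^'n^'n \<Rightarrow> complex^'n^'n" where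
  "pos_part A = (THE P. \<exists>N. A = P - N \<and> psd P \<and> psd N \<and> P ** N = 0)"

definition neg_part :: "complex^'n^'n \<Rightarrow> complex^'n^'n" where
  "neg_part A = (THE N. \<exists>P. A = P - N \<and> psd P \<and> psd N \<and> P ** N = 0)"

definition op_norm :: "complex^'n^'m \<Rightarrow> real" where
  "op_norm A = onorm (\<lambda>x. A *v x)"

text \<open>A positive unital (real-)linear map H_n -> H_k, given by its action on H_n.\<close>
definition positive_unital_map :: "(complex^'n^'n \<Rightarrow> complex^'k^'k) \<Rightarrow> bool" where
  "positive_unital_map \<Phi> \<longleftrightarrow>
     (\<forall>A. hermitian A \<longrightarrow> hermitian (\<Phi> A)) \<and>
     (\<forall>A B. hermitian A \<longrightarrow> hermitian B \<longrightarrow> \<Phi> (A + B) = \<Phi> A + \<Phi> B) \<and>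
     (\<forall>(r::real) A. hermitian A \<longrightarrow> \<Phi> (r *\<^sub>R A) = r *\<^sub>R \<Phi> A) \<and>
     (\<forall>A. psd A \<longrightarrow> psd (\<Phi> A)) \<and>
     \<Phi> (mat 1) = mat 1"

end

theory Submission
  imports Defs
begin

text \<open>
  By the spectral theorem, the positive and negative parts of a Hermitian matrix A are the
  spectral sums of the positive resp. negative parts of its eigenvalues. Hence, for A neither
  positive nor negative semidefinite, a = \<parallel>A_+\<parallel> is the largest eigenvalue of A,
  -b = -\<parallel>A_-\<parallel> the smallest, a, b > 0, and -b \<le> A \<le> a in the Loewner order.
  If u, w are unit eigenvectors of A for a and -b and B satisfies -b \<le> B \<le> a, then
  \<Phi>(X) = \<langle>u, X u\<rangle> Q1 + \<langle>w, X w\<rangle> Q2 with Q1 = (B + b)/(a + b) and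
  Q2 = (a - B)/(a + b) is positive (Q1, Q2 are psd), unital (Q1 + Q2 = 1)
  and maps A to a Q1 - b Q2 = B. The hypotheses are symmetric in A and B.
\<close>

section \<open>The complex inner product\<close>

definition cinner :: "complex^'n \<Rightarrow> complex^'n \<Rightarrow> complex" where
  "cinner x y = (\<Sum>i\<in>UNIV. cnj (x$i) * y$i)"

lemma cinner_add_right: "cinner x (y + z) = cinner x y + cinner x z"
  by (simp add: cinner_def distrib_left sum.distrib)

lemma cinner_add_left: "cinner (x + y) z = cinner x z + cinner y z"
  by (simp add: cinner_def distrib_right sum.distrib)

lemma cinner_diff_right: "cinner x (y - z) = cinner x y - cinner x z"
  by (simp add: cinner_def right_diff_distrib sum_subtractf)

lemma cinner_minus_right: "cinner x (- y) = - cinner x y"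
  by (simp add: cinner_def sum_negf)

lemma cinner_smult_right: "cinner x (c *s y) = c * cinner x y"
  by (simp add: cinner_def sum_distrib_left algebra_simps)

lemma cinner_smult_left: "cinner (c *s x) y = cnj c * cinner x y"
  by (simp add: cinner_def sum_distrib_left algebra_simps)

lemma cinner_zero_right [simp]: "cinner x 0 = 0"
  by (simp add: cinner_def)

lemma cinner_zero_left [simp]: "cinner 0 x = 0"
  by (simp add: cinner_def)

lemma cinner_sum_right: "cinner x (sum f S) = (\<Sum>s\<in>S. cinner x (f s))"
  by (induction S rule: infinite_finite_induct) (simp_all add: cinner_add_right)

lemma cinner_sum_left: "cinner (sum f S) x = (\<Sum>s\<in>S. cinner (f s) x)"
  by (induction S rule: infinite_finite_induct) (simp_all add: cinner_add_left)

lemma cnj_cinner: "cnj (cinner x y) = cinner y x"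
  by (simp add: cinner_def mult.commute)

lemma cinner_self: "cinner x x = of_real (norm x ^ 2)"
proof -
  have "norm x ^ 2 = (\<Sum>i\<in>UNIV. (cmod (x$i))^2)"
    by (simp add: norm_vec_def L2_set_def sum_nonneg)
  then have "of_real (norm x ^ 2) = (\<Sum>i\<in>UNIV. complex_of_real ((cmod (x$i))^2))"
    by simp
  also have "\<dots> = cinner x x"
    unfolding cinner_def complex_norm_square by (simp add: mult.commute)
  finally show ?thesis by simp
qed

lemma cinner_self_eq_0: "cinner x x = 0 \<longleftrightarrow> x = 0"
  by (simp add: cinner_self)

lemma Re_cinner_self: "Re (cinner x x) = norm x ^ 2"
  by (simp add: cinner_self)

lemma norm_smult: "norm (c *s x) = cmod c * norm (x::complex^'n)"
proof -
  have "norm (c *s x) ^ 2 = Re (cnj c * (c * cinner x x))"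
    by (simp only: Re_cinner_self[symmetric] cinner_smult_left cinner_smult_right)
      (metis mult.left_commute)
  also have "\<dots> = Re (complex_of_real ((cmod c)^2) * cinner x x)"
    by (subst complex_norm_square) (metis mult.left_commute mult.assoc)
  also have "\<dots> = (cmod c * norm x)^2"
    by (simp add: cinner_self power_mult_distrib del: of_real_power)
  finally show ?thesis by simp
qed

lemma continuous_on_cinner_right: "continuous_on S (\<lambda>v. cinner x v)"
  unfolding cinner_def by (intro continuous_intros)

lemma inner_eq_Re_cinner: "inner x y = Re (cinner x y)"
  by (simp add: inner_vec_def inner_complex_def cinner_def)

lemma quad_form_cinner: "quad_form A v = cinner v (A *v v)"
  by (simp add: quad_form_def cinner_def matrix_vector_mult_def sum_distrib_left mult.assoc)

lemma cinner_hermitian_adjoint: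
  assumes "hermitian A"
  shows "cinner x (A *v y) = cinner (A *v x) y"
proof -
  have A: "cnj (A $ j $ i) = A $ i $ j" for i j
    using assms unfolding hermitian_def conj_transpose_def vec_eq_iff by auto
  have "cinner x (A *v y) = (\<Sum>i\<in>UNIV. \<Sum>j\<in>UNIV. cnj (x$i) * A$i$j * y$j)"
    by (simp add: cinner_def matrix_vector_mult_def sum_distrib_left mult.assoc)
  also have "\<dots> = (\<Sum>j\<in>UNIV. \<Sum>i\<in>UNIV. cnj (x$i) * A$i$j * y$j)"
    by (rule sum.swap)
  also have "\<dots> = cinner (A *v x) y"
    by (simp add: cinner_def matrix_vector_mult_def sum_distrib_left sum_distrib_right A ac_simps)
  finally show ?thesis .
qed

lemma Im_quad_form_hermitian:
  assumes "hermitian A"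
  shows "Im (quad_form A v) = 0"
proof -
  have "cnj (quad_form A v) = quad_form A v"
    by (simp add: quad_form_cinner cnj_cinner cinner_hermitian_adjoint[OF assms])
  then show ?thesis by (metis Reals_cnj_iff complex_is_Real_iff)
qed

lemma psd_iff_Re_quad_form: "psd A \<longleftrightarrow> hermitian A \<and> (\<forall>v. 0 \<le> Re (quad_form A v))"
  using Im_quad_form_hermitian unfolding psd_def by blast

lemma hermitian_add: "hermitian M \<Longrightarrow> hermitian N \<Longrightarrow> hermitian (M + N)"
  by (simp add: hermitian_def conj_transpose_def vec_eq_iff)

lemma hermitian_diff: "hermitian M \<Longrightarrow> hermitian N \<Longrightarrow> hermitian (M - N)"
  by (simp add: hermitian_def conj_transpose_def vec_eq_iff)

lemma hermitian_scaleR: "hermitian M \<Longrightarrow> hermitian (r *\<^sub>R M)"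
  by (simp add: hermitian_def conj_transpose_def vec_eq_iff)

lemma hermitian_mat_1: "hermitian (mat 1 :: complex^'n^'n)"
  by (simp add: hermitian_def conj_transpose_def vec_eq_iff mat_def)

lemma scaleR_matrix_vector_mult: "(r *\<^sub>R M) *v v = complex_of_real r *s (M *v (v::complex^'n))"
  by (simp add: vec_eq_iff matrix_vector_mult_def)
    (simp add: scaleR_conv_of_real sum_distrib_left mult.assoc)

lemma quad_form_add: "quad_form (M + N) v = quad_form M v + quad_form N v"
  by (simp add: quad_form_cinner matrix_vector_mult_add_rdistrib cinner_add_right)

lemma quad_form_diff: "quad_form (M - N) v = quad_form M v - quad_form N v"
  by (simp add: quad_form_cinner matrix_vector_mult_diff_rdistrib cinner_diff_right)

lemma quad_form_scaleR: "quad_form (r *\<^sub>R M) v = complex_of_real r * quad_form M v"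
  by (simp add: quad_form_cinner scaleR_matrix_vector_mult cinner_smult_right)

lemma quad_form_mat_1: "quad_form (mat 1) v = complex_of_real (norm v ^ 2)"
  by (simp add: quad_form_cinner cinner_self)

lemma psd_add: "psd M \<Longrightarrow> psd N \<Longrightarrow> psd (M + N)"
  by (simp add: psd_iff_Re_quad_form hermitian_add quad_form_add)

lemma psd_scaleR: "psd M \<Longrightarrow> 0 \<le> r \<Longrightarrow> psd (r *\<^sub>R M)"
  by (simp add: psd_iff_Re_quad_form hermitian_scaleR quad_form_scaleR)

section \<open>The spectral theorem\<close>

lemma linear_coeff_zero_if_quadratic_nonpos:
  fixes d q :: real
  assumes "\<And>t. 2*t*d + t^2*q \<le> 0"
  shows "d = 0"
proof (rule ccontr)
  assume "d \<noteq> 0"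
  define p where "p = \<bar>q\<bar> + 1"
  have p: "p > 0" "2*p + q > 0" by (auto simp: p_def)
  have "2*(d/p)*d + (d/p)^2*q = d^2 * (2*p + q) / p^2"
    using p by (simp add: field_simps power2_eq_square)
  moreover have "d^2 * (2*p + q) / p^2 > 0" using \<open>d \<noteq> 0\<close> p by simp
  ultimately show False using assms[of "d/p"] by linarith
qed

lemma Re_cinner_add_smult_hermitian:
  assumes "hermitian A"
  shows "Re (cinner (u + of_real t *s w) (A *v (u + of_real t *s w))) =
    Re (cinner u (A *v u)) + 2*t*Re (cinner w (A *v u)) + t^2 * Re (cinner w (A *v w))"
proof -
  have "cinner u (A *v w) = cnj (cinner w (A *v u))"
    by (simp add: cinner_hermitian_adjoint[OF assms] cnj_cinner)
  then show ?thesis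
    by (simp add: vector_scalar_commute cinner_add_left
        cinner_add_right cinner_smult_left cinner_smult_right power2_eq_square algebra_simps)
qed

corollary norm_add_smult_power2:
  "norm (u + of_real t *s w) ^ 2 = norm u ^ 2 + 2*t*Re (cinner w u) + t^2 * norm w ^ 2"
  using Re_cinner_add_smult_hermitian[OF hermitian_mat_1, of u t w]
  by (simp only: matrix_vector_mul_lid Re_cinner_self)

text \<open>
  First-order condition at a maximiser u of the Rayleigh quotient on an A-invariant complex
  subspace S: perturbing u to u + t x gives Re \<langle>x, A u - M u\<rangle> = 0 for x in S, replacing x
  by i x gives \<langle>x, A u - M u\<rangle> = 0, and A u - M u itself lies in S.
\<close>
lemma rayleigh_maximizer_eigenvector:
  assumes herm: "hermitian A"
    and S_add: "\<And>x y. x \<in> S \<Longrightarrow> y \<in> S \<Longrightarrow> x + y \<in> S"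
    and S_smult: "\<And>c x. x \<in> S \<Longrightarrow> c *s x \<in> S"
    and S_invariant: "\<And>x. x \<in> S \<Longrightarrow> A *v x \<in> S"
    and max: "\<And>v. v \<in> S \<Longrightarrow> Re (cinner v (A *v v)) \<le> M * norm v ^ 2"
    and u: "u \<in> S" "norm u = 1" "Re (cinner u (A *v u)) = M"
  shows "A *v u = of_real M *s u"
proof -
  define D where "D x = cinner x (A *v u) - of_real M * cinner x u" for x
  have Re_D: "Re (D x) = 0" if x: "x \<in> S" for x
  proof (rule linear_coeff_zero_if_quadratic_nonpos)
    fix t
    have "u + of_real t *s x \<in> S" using u x S_add S_smult by blast
    then have "Re (cinner (u + of_real t *s x) (A *v (u + of_real t *s x)))
        \<le> M * norm (u + of_real t *s x) ^ 2" by (rule max)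
    then show "2*t*Re (D x) + t^2*(Re (cinner x (A *v x)) - M * norm x ^ 2) \<le> 0"
      unfolding Re_cinner_add_smult_hermitian[OF herm] norm_add_smult_power2
      using u by (simp add: D_def algebra_simps)
  qed
  have D_0: "D x = 0" if x: "x \<in> S" for x
  proof -
    have "D (\<i> *s x) = - \<i> * D x"
      by (simp add: D_def cinner_smult_left algebra_simps)
    then have "Im (D x) = 0" using Re_D[of "\<i> *s x"] x S_smult by simp
    then show ?thesis using Re_D[OF x] by (simp add: complex_eq_iff)
  qed
  define z where "z = A *v u - complex_of_real M *s u"
  have "z \<in> S"
    unfolding z_def diff_conv_add_uminus
    using S_invariant[OF u(1)] S_smult[OF u(1)] S_add
    by (metis vector_sneg_minus1 vector_smult_assoc)
  then have "D z = 0" by (rule D_0)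
  moreover have "D z = cinner z z"
    by (simp add: D_def z_def cinner_diff_right cinner_smult_right)
  ultimately show ?thesis by (simp add: cinner_self_eq_0 z_def)
qed

lemma rayleigh_quotient_max_attained:
  assumes "closed S" and S_smult: "\<And>c x. x \<in> S \<Longrightarrow> c *s x \<in> S"
    and "w \<in> S" "w \<noteq> 0"
  obtains u where "u \<in> S" "norm u = 1"
    "\<And>v. v \<in> S \<Longrightarrow> Re (cinner v (A *v v)) \<le> Re (cinner u (A *v u)) * norm v ^ 2"
proof -
  define K where "K = S \<inter> sphere 0 1"
  have "compact K" unfolding K_def by (intro closed_Int_compact \<open>closed S\<close> compact_sphere)
  have "complex_of_real (1 / norm w) *s w \<in> K"
    using assms(3,4) S_smult unfolding K_def by (auto simp: norm_smult norm_divide)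
  then have "K \<noteq> {}" by auto
  define g where "g v = Re (cinner v (A *v v))" for v
  have "continuous_on K g"
    unfolding g_def cinner_def matrix_vector_mult_def by (intro continuous_intros)
  then obtain u where u: "u \<in> K" and u_max: "\<And>y. y \<in> K \<Longrightarrow> g y \<le> g u"
    using continuous_attains_sup[OF \<open>compact K\<close> \<open>K \<noteq> {}\<close>] by blast
  have "g v \<le> g u * norm v ^ 2" if v: "v \<in> S" for v
  proof (cases "v = 0")
    case True
    then show ?thesis by (simp add: g_def)
  next
    case False
    define r where "r = 1 / norm v"
    have "complex_of_real r *s v \<in> K"
      using v False by (auto simp: K_def S_smult norm_smult r_def norm_divide)
    then have "g (complex_of_real r *s v) \<le> g u" by (rule u_max)
    moreover have "g (complex_of_real r *s v) = r^2 * g v"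
      by (simp add: g_def vector_scalar_commute cinner_smult_left cinner_smult_right
          power2_eq_square)
    moreover have "r^2 * norm v^2 = 1" using False by (simp add: r_def power_divide)
    ultimately have "r^2 * g v * norm v^2 \<le> g u * norm v^2"
      by (simp add: mult_right_mono)
    with \<open>r^2 * norm v^2 = 1\<close> show ?thesis by (simp add: algebra_simps)
  qed
  moreover have "u \<in> S" "norm u = 1" using u by (auto simp: K_def)
  ultimately show ?thesis using that unfolding g_def by blast
qed

lemma hermitian_eigenvector_orthogonal:
  assumes herm: "hermitian A" and F: "\<forall>f\<in>F. \<exists>c. A *v f = c *s f"
    and w: "w \<noteq> 0" "\<forall>f\<in>F. cinner f w = 0"
  obtains u M where "norm u = 1" "\<forall>f\<in>F. cinner f u = 0" "A *v u = complex_of_real M *s u"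
proof -
  define S where "S = {v. \<forall>f\<in>F. cinner f v = 0}"
  have S_add: "x \<in> S \<Longrightarrow> y \<in> S \<Longrightarrow> x + y \<in> S" for x y
    by (simp add: S_def cinner_add_right)
  have S_smult: "x \<in> S \<Longrightarrow> c *s x \<in> S" for x c
    by (simp add: S_def cinner_smult_right)
  have S_invariant: "A *v x \<in> S" if x: "x \<in> S" for x
  proof -
    have "cinner f (A *v x) = 0" if f: "f \<in> F" for f
    proof -
      obtain c where c: "A *v f = c *s f" using F f by blast
      have "cinner f (A *v x) = cinner (A *v f) x" by (rule cinner_hermitian_adjoint[OF herm])
      then show ?thesis using x f by (simp add: c cinner_smult_left S_def)
    qed
    then show ?thesis by (simp add: S_def)
  qed
  have "closed {v. cinner f v = 0}" for f :: "complex^'n"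
    using continuous_closed_preimage_constant[OF continuous_on_cinner_right closed_UNIV] by simp
  then have "closed S" unfolding S_def Collect_ball_eq by blast
  moreover have "w \<in> S" using w(2) by (simp add: S_def)
  ultimately obtain u where u: "u \<in> S" "norm u = 1"
    and max: "\<And>v. v \<in> S \<Longrightarrow> Re (cinner v (A *v v)) \<le> Re (cinner u (A *v u)) * norm v ^ 2"
    using rayleigh_quotient_max_attained[OF _ S_smult _ w(1)] by blast
  have "A *v u = complex_of_real (Re (cinner u (A *v u))) *s u"
    by (rule rayleigh_maximizer_eigenvector[OF herm S_add S_smult S_invariant max u refl])
  with u show ?thesis using that unfolding S_def by blast
qed

definition orthonormal :: "(complex^'n) set \<Rightarrow> bool" where
  "orthonormal E \<longleftrightarrow> (\<forall>e\<in>E. \<forall>f\<in>E. cinner e f = (if e = f then 1 else 0))"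

lemma norm_orthonormal:
  assumes "orthonormal E" "e \<in> E"
  shows "norm e = 1"
proof -
  have "norm e ^ 2 = 1"
    using assms Re_cinner_self[of e] unfolding orthonormal_def by simp
  then show ?thesis using norm_ge_zero[of e] by (auto simp: power2_eq_1_iff)
qed

lemma cinner_orthonormal_expansion:
  assumes "orthonormal E" "finite E" "f \<in> E"
  shows "cinner f (\<Sum>e\<in>E. a e *s e) = a f"
proof -
  have "cinner f (\<Sum>e\<in>E. a e *s e) = (\<Sum>e\<in>E. a e * (if f = e then 1 else 0))"
    using assms(1,3) unfolding orthonormal_def by (simp add: cinner_sum_right cinner_smult_right)
  also have "\<dots> = a f" using assms(2,3) by (simp add: if_distrib cong: if_cong)
  finally show ?thesis .
qed

lemma orthonormal_finite_card_le:
  fixes E :: "(complex^'n) set"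
  assumes "orthonormal E"
  shows "finite E \<and> card E \<le> DIM(complex^'n)"
proof -
  have "pairwise orthogonal E"
    using assms unfolding pairwise_def orthogonal_def orthonormal_def inner_eq_Re_cinner by simp
  moreover have "0 \<notin> E"
    using norm_orthonormal[OF assms] by force
  ultimately have "independent E" by (rule pairwise_orthogonal_independent)
  then show ?thesis by (rule independent_bound)
qed

definition orthonormal_basis :: "(complex^'n) set \<Rightarrow> bool" where
  "orthonormal_basis E \<longleftrightarrow>
    finite E \<and> orthonormal E \<and> (\<forall>v. v = (\<Sum>e\<in>E. cinner e v *s e))"

definition eigenbasis :: "complex^'n^'n \<Rightarrow> (complex^'n) set \<Rightarrow> (complex^'n \<Rightarrow> real) \<Rightarrow> bool"
  where "eigenbasis A E l \<longleftrightarrow>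
    orthonormal_basis E \<and> (\<forall>e\<in>E. A *v e = complex_of_real (l e) *s e)"

lemma orthonormal_basisD:
  assumes "orthonormal_basis E"
  shows "finite E" "orthonormal E" "\<And>v. v = (\<Sum>e\<in>E. cinner e v *s e)"
  using assms unfolding orthonormal_basis_def by blast+

lemma eigenbasisD:
  assumes "eigenbasis A E l"
  shows "orthonormal_basis E" "\<And>e. e \<in> E \<Longrightarrow> A *v e = complex_of_real (l e) *s e"
  using assms unfolding eigenbasis_def by blast+

lemma orthonormal_eigenvectors_extend:
  assumes herm: "hermitian A" and "finite F" "orthonormal F"
    and F: "\<forall>f\<in>F. \<exists>c::real. A *v f = complex_of_real c *s f"
    and "v \<noteq> (\<Sum>e\<in>F. cinner e v *s e)"
  obtains u M where "u \<notin> F" "orthonormal (insert u F)" "A *v u = complex_of_real M *s u"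
proof -
  define w where "w = v - (\<Sum>e\<in>F. cinner e v *s e)"
  have "w \<noteq> 0" using assms(5) by (simp add: w_def)
  moreover have "\<forall>f\<in>F. cinner f w = 0"
    using cinner_orthonormal_expansion[OF \<open>orthonormal F\<close> \<open>finite F\<close>]
    by (simp add: w_def cinner_diff_right)
  moreover have "\<forall>f\<in>F. \<exists>c. A *v f = c *s f" using F by blast
  ultimately obtain u M where u: "norm u = 1" "\<forall>f\<in>F. cinner f u = 0"
    and eigen: "A *v u = complex_of_real M *s u"
    using hermitian_eigenvector_orthogonal[OF herm] by metis
  have "cinner u u = 1" using u by (simp add: cinner_self)
  moreover have "\<forall>f\<in>F. cinner u f = 0" using u(2) by (metis cnj_cinner complex_cnj_zero)
  ultimately have "u \<notin> F" "orthonormal (insert u F)"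
    using \<open>orthonormal F\<close> u(2) unfolding orthonormal_def by auto
  with eigen show ?thesis using that by blast
qed

theorem hermitian_eigenbasis_exists:
  fixes A :: "complex^'n^'n"
  assumes herm: "hermitian A"
  obtains E l where "eigenbasis A E l"
proof -
  define good where "good F \<longleftrightarrow>
      finite F \<and> orthonormal F \<and> (\<forall>f\<in>F. \<exists>c::real. A *v f = complex_of_real c *s f)"
    for F :: "(complex^'n) set"
  define C where "C = card ` {F. good F}"
  have "C \<subseteq> {..DIM(complex^'n)}"
    using orthonormal_finite_card_le unfolding C_def good_def by auto
  then have "finite C" by (rule finite_subset) simp
  have "good {}" by (simp add: good_def orthonormal_def)
  then have "C \<noteq> {}" unfolding C_def by blast
  obtain F where F: "good F" and card_F: "card F = Max C"
    using Max_in[OF \<open>finite C\<close> \<open>C \<noteq> {}\<close>] unfolding C_def by force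
  have "finite F" "orthonormal F" using F by (auto simp: good_def)
  have span: "v = (\<Sum>e\<in>F. cinner e v *s e)" for v
  proof (rule ccontr)
    assume "v \<noteq> (\<Sum>e\<in>F. cinner e v *s e)"
    then obtain u M where "u \<notin> F" "orthonormal (insert u F)" "A *v u = complex_of_real M *s u"
      using orthonormal_eigenvectors_extend[OF herm \<open>finite F\<close> \<open>orthonormal F\<close>] F
      unfolding good_def by blast
    with F have "good (insert u F)" by (auto simp: good_def)
    then have "card (insert u F) \<le> card F"
      using Max_ge[OF \<open>finite C\<close>] card_F unfolding C_def by simp
    with \<open>u \<notin> F\<close> \<open>finite F\<close> show False by simp
  qed
  define l where "l e = (SOME c::real. A *v e = complex_of_real c *s e)" for e
  have "A *v e = complex_of_real (l e) *s e" if "e \<in> F" for e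
    using F that unfolding good_def l_def by (metis (mono_tags, lifting) someI_ex)
  then have "eigenbasis A F l"
    unfolding eigenbasis_def orthonormal_basis_def using \<open>finite F\<close> \<open>orthonormal F\<close> span
    by blast
  then show ?thesis by (rule that)
qed

lemma orthonormal_basis_nonempty: "orthonormal_basis E \<Longrightarrow> E \<noteq> {}"
  using orthonormal_basisD(3)[of E "\<chi> i. 1"] by (auto simp: vec_eq_iff)

lemma parseval:
  assumes "orthonormal_basis E"
  shows "norm v ^ 2 = (\<Sum>e\<in>E. (cmod (cinner e v))^2)"
proof -
  have "complex_of_real (norm v ^ 2) = cinner (\<Sum>e\<in>E. cinner e v *s e) v"
    using orthonormal_basisD(3)[OF assms, of v] by (simp add: cinner_self)
  also have "\<dots> = (\<Sum>e\<in>E. complex_of_real ((cmod (cinner e v))^2))"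
    unfolding complex_norm_square by (simp add: cinner_sum_left cinner_smult_left mult.commute)
  finally show ?thesis by (metis of_real_eq_iff of_real_sum)
qed

definition spectral_matrix :: "(complex^'n) set \<Rightarrow> (complex^'n \<Rightarrow> real) \<Rightarrow> complex^'n^'n" where
  "spectral_matrix E c = (\<chi> i j. \<Sum>e\<in>E. complex_of_real (c e) * e$i * cnj (e$j))"

lemma spectral_matrix_mult_vec:
  "spectral_matrix E c *v v = (\<Sum>e\<in>E. (complex_of_real (c e) * cinner e v) *s e)"
proof -
  have "(\<Sum>j\<in>UNIV. (\<Sum>e\<in>E. complex_of_real (c e) * e$i * cnj (e$j)) * v$j) =
      (\<Sum>j\<in>UNIV. \<Sum>e\<in>E. complex_of_real (c e) * e$i * cnj (e$j) * v$j)" for i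
    by (simp add: sum_distrib_right)
  also have "\<dots> i = (\<Sum>e\<in>E. \<Sum>j\<in>UNIV. complex_of_real (c e) * e$i * cnj (e$j) * v$j)" for i
    by (rule sum.swap)
  finally show ?thesis
    by (simp add: spectral_matrix_def vec_eq_iff matrix_vector_mult_def cinner_def
        sum_distrib_left ac_simps)
qed

lemma hermitian_spectral_matrix: "hermitian (spectral_matrix E c)"
  by (simp add: hermitian_def conj_transpose_def spectral_matrix_def vec_eq_iff ac_simps)

lemma spectral_matrix_diff:
  "spectral_matrix E c - spectral_matrix E d = spectral_matrix E (\<lambda>e. c e - d e)"
  by (simp add: spectral_matrix_def vec_eq_iff sum_subtractf[symmetric] algebra_simps)

lemma quad_form_spectral_matrix:
  "quad_form (spectral_matrix E c) v = complex_of_real (\<Sum>e\<in>E. c e * (cmod (cinner e v))^2)"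
proof -
  have "quad_form (spectral_matrix E c) v
      = (\<Sum>e\<in>E. complex_of_real (c e) * (cinner e v * cnj (cinner e v)))"
    by (simp add: quad_form_cinner spectral_matrix_mult_vec cinner_sum_right cinner_smult_right
        cnj_cinner mult.assoc)
  then show ?thesis by (simp only: complex_norm_square[symmetric]) simp
qed

lemma psd_spectral_matrix: "(\<And>e. e \<in> E \<Longrightarrow> 0 \<le> c e) \<Longrightarrow> psd (spectral_matrix E c)"
  by (simp add: psd_iff_Re_quad_form hermitian_spectral_matrix quad_form_spectral_matrix sum_nonneg)

lemma cinner_spectral_matrix:
  assumes "orthonormal E" "finite E" "f \<in> E"
  shows "cinner f (spectral_matrix E c *v v) = complex_of_real (c f) * cinner f v"
  unfolding spectral_matrix_mult_vec using cinner_orthonormal_expansion[OF assms] .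

lemma spectral_matrix_mult_vec_member:
  assumes "orthonormal E" "finite E" "f \<in> E"
  shows "spectral_matrix E c *v f = complex_of_real (c f) *s f"
proof -
  have "spectral_matrix E c *v f = (\<Sum>e\<in>E. if e = f then complex_of_real (c e) *s e else 0)"
    using assms(1,3) unfolding spectral_matrix_mult_vec orthonormal_def by (intro sum.cong) auto
  also have "\<dots> = complex_of_real (c f) *s f"
    using assms(2,3) by simp
  finally show ?thesis .
qed

lemma orthonormal_basis_eq_spectral_matrix:
  assumes "orthonormal_basis E" "\<And>e. e \<in> E \<Longrightarrow> X *v e = complex_of_real (k e) *s e"
  shows "X = spectral_matrix E k"
  unfolding matrix_eq
proof
  fix v
  have "X *v v = X *v (\<Sum>e\<in>E. cinner e v *s e)"
    using orthonormal_basisD(3)[OF assms(1)] by metis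
  also have "\<dots> = (\<Sum>e\<in>E. cinner e v *s (X *v e))"
    by (simp add: vec.sum vector_scalar_commute)
  also have "\<dots> = spectral_matrix E k *v v"
    unfolding spectral_matrix_mult_vec
    by (intro sum.cong refl) (simp add: assms(2) mult.commute)
  finally show "X *v v = spectral_matrix E k *v v" .
qed

lemma eigenbasis_spectral_decomposition: "eigenbasis A E l \<Longrightarrow> A = spectral_matrix E l"
  by (rule orthonormal_basis_eq_spectral_matrix) (auto dest: eigenbasisD)

lemma op_norm_spectral_matrix:
  assumes E: "orthonormal_basis E" and c: "\<And>e. e \<in> E \<Longrightarrow> 0 \<le> c e"
    and e0: "e0 \<in> E" "\<And>e. e \<in> E \<Longrightarrow> c e \<le> c e0"
  shows "op_norm (spectral_matrix E c) = c e0"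
proof (rule antisym)
  note orth = orthonormal_basisD(2)[OF E] and fin = orthonormal_basisD(1)[OF E]
  have "0 \<le> c e0" using c e0 by blast
  have "norm (spectral_matrix E c *v x) \<le> c e0 * norm x" for x
  proof (rule power2_le_imp_le)
    have "norm (spectral_matrix E c *v x) ^ 2 = (\<Sum>e\<in>E. (c e)^2 * (cmod (cinner e x))^2)"
      by (simp add: parseval[OF E] cinner_spectral_matrix[OF orth fin] norm_mult power_mult_distrib)
    also have "\<dots> \<le> (\<Sum>e\<in>E. (c e0)^2 * (cmod (cinner e x))^2)"
      using c e0 by (intro sum_mono mult_right_mono power_mono) auto
    also have "\<dots> = (c e0 * norm x)^2"
      by (simp add: parseval[OF E, of x] sum_distrib_left power_mult_distrib)
    finally show "norm (spectral_matrix E c *v x) ^ 2 \<le> (c e0 * norm x)^2" .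
    show "0 \<le> c e0 * norm x" using \<open>0 \<le> c e0\<close> by simp
  qed
  then show "op_norm (spectral_matrix E c) \<le> c e0"
    unfolding op_norm_def by (rule onorm_le)
  have "norm (spectral_matrix E c *v e0) / norm e0 \<le> op_norm (spectral_matrix E c)"
    unfolding op_norm_def
    by (rule le_onorm) (simp add: linear_conv_bounded_linear)
  then show "c e0 \<le> op_norm (spectral_matrix E c)"
    using norm_orthonormal[OF orth e0(1)] \<open>0 \<le> c e0\<close>
    by (simp add: spectral_matrix_mult_vec_member[OF orth fin e0(1)] norm_smult)
qed

section \<open>Positive and negative parts\<close>

lemma pos_neg_part_eqI:
  assumes "A = P - N" "psd P" "psd N" "P ** N = 0"
    and "\<And>P' N'. A = P' - N' \<Longrightarrow> psd P' \<Longrightarrow> psd N' \<Longrightarrow> P' ** N' = 0 \<Longrightarrow>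
      P' = P \<and> N' = N"
  shows "pos_part A = P" "neg_part A = N"
  unfolding pos_part_def neg_part_def using assms by blast+

lemma hermitian_mult_eq_0_commute:
  assumes "hermitian P" "hermitian N" "P ** N = 0"
  shows "N ** P = 0"
  unfolding matrix_eq
proof
  fix y
  define z where "z = N *v (P *v y)"
  have "cinner z z = cinner (P *v (N *v z)) y"
    unfolding z_def by (simp add: cinner_hermitian_adjoint assms(1,2))
  also have "\<dots> = 0" by (simp add: matrix_vector_mul_assoc assms(3))
  finally show "(N ** P) *v y = 0 *v y"
    by (simp add: cinner_self_eq_0 z_def matrix_vector_mul_assoc)
qed

lemma psd_eigenvalue_nonpos_imp_zero:
  assumes "psd P" "P *v (P *v e) = complex_of_real l *s (P *v e)" "l \<le> 0"
  shows "P *v e = 0"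
proof -
  have "norm (P *v e) ^ 2 = Re (cinner e (P *v (P *v e)))"
    using assms(1) by (simp add: Re_cinner_self[symmetric] cinner_hermitian_adjoint psd_def)
  also have "\<dots> = l * Re (quad_form P e)"
    by (simp add: assms(2) cinner_smult_right quad_form_cinner)
  also have "\<dots> \<le> 0"
    using assms(1,3) by (simp add: psd_iff_Re_quad_form mult_nonpos_nonneg)
  finally show ?thesis by simp
qed

lemma eigenbasis_spectral_parts:
  assumes E: "eigenbasis A E l"
  shows "A = spectral_matrix E (\<lambda>e. max (l e) 0) - spectral_matrix E (\<lambda>e. max (- l e) 0)"
    and "spectral_matrix E (\<lambda>e. max (l e) 0) ** spectral_matrix E (\<lambda>e. max (- l e) 0) = 0"
proof -
  show "A = spectral_matrix E (\<lambda>e. max (l e) 0) - spectral_matrix E (\<lambda>e. max (- l e) 0)"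
  proof -
    have "(\<lambda>e. max (l e) 0 - max (- l e) 0) = l" by (auto simp: fun_eq_iff max_def)
    then show ?thesis
      unfolding spectral_matrix_diff using eigenbasis_spectral_decomposition[OF E] by simp
  qed
  have parts_orthogonal: "max (l e) 0 * max (- l e) 0 = 0" for e by (simp add: max_def)
  show "spectral_matrix E (\<lambda>e. max (l e) 0) ** spectral_matrix E (\<lambda>e. max (- l e) 0) = 0"
    unfolding matrix_eq matrix_vector_mul_assoc[symmetric]
    by (simp add: parts_orthogonal spectral_matrix_mult_vec[of E "\<lambda>e. max (l e) 0"]
        cinner_spectral_matrix[OF orthonormal_basisD(2,1)[OF eigenbasisD(1)[OF E]]]
        mult.assoc[symmetric] of_real_mult[symmetric] del: of_real_mult)
qed

text \<open>
  If A = P - N with P, N psd and P N = 0 (hence N P = 0), then on an eigenvector e of A with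
  eigenvalue l, P P e = l P e and N N e = -l N e, so that P e = 0 if l \<le> 0 and N e = 0 if l \<ge> 0.
\<close>
lemma eigenbasis_spectral_parts_unique:
  assumes E: "eigenbasis A E l" and A: "A = P - N" and "psd P" "psd N" "P ** N = 0"
  shows "P = spectral_matrix E (\<lambda>e. max (l e) 0) \<and> N = spectral_matrix E (\<lambda>e. max (- l e) 0)"
proof -
  have "N ** P = 0"
    using hermitian_mult_eq_0_commute assms(3-5) by (auto simp: psd_def)
  have eigen: "P *v e = complex_of_real (max (l e) 0) *s e \<and>
      N *v e = complex_of_real (max (- l e) 0) *s e" if e: "e \<in> E" for e
  proof -
    have Ae: "P *v e - N *v e = complex_of_real (l e) *s e"
      using eigenbasisD(2)[OF E e] by (simp add: A matrix_vector_mult_diff_rdistrib)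
    have "P *v (N *v e) = 0" "N *v (P *v e) = 0"
      using \<open>P ** N = 0\<close> \<open>N ** P = 0\<close> by (simp_all add: matrix_vector_mul_assoc)
    then have PP: "P *v (P *v e) = complex_of_real (l e) *s (P *v e)"
      and NN: "N *v (N *v e) = complex_of_real (- l e) *s (N *v e)"
      using arg_cong[OF Ae, of "(*v) P"] arg_cong[OF Ae, of "(*v) N"]
      by (simp_all add: matrix_vector_mult_diff_distrib vector_scalar_commute)
        (metis minus_minus)
    show ?thesis
    proof (cases "0 \<le> l e")
      case True
      then have "N *v e = 0" using psd_eigenvalue_nonpos_imp_zero[OF \<open>psd N\<close> NN] by simp
      with Ae True show ?thesis by (simp add: max_def)
    next
      case False
      then have "P *v e = 0" using psd_eigenvalue_nonpos_imp_zero[OF \<open>psd P\<close> PP] by simp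
      with Ae False show ?thesis by (simp add: max_def) (metis minus_minus)
    qed
  qed
  show ?thesis
    using orthonormal_basis_eq_spectral_matrix[OF eigenbasisD(1)[OF E]] eigen by metis
qed

theorem pos_neg_part_eigenbasis:
  assumes E: "eigenbasis A E l"
  shows "pos_part A = spectral_matrix E (\<lambda>e. max (l e) 0)"
    and "neg_part A = spectral_matrix E (\<lambda>e. max (- l e) 0)"
proof -
  have "psd (spectral_matrix E (\<lambda>e. max (l e) 0))" "psd (spectral_matrix E (\<lambda>e. max (- l e) 0))"
    by (simp_all add: psd_spectral_matrix)
  note eqI = pos_neg_part_eqI[OF eigenbasis_spectral_parts(1)[OF E] this
      eigenbasis_spectral_parts(2)[OF E]]
  show "pos_part A = spectral_matrix E (\<lambda>e. max (l e) 0)"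
    by (rule eqI(1)) (rule eigenbasis_spectral_parts_unique[OF E])
  show "neg_part A = spectral_matrix E (\<lambda>e. max (- l e) 0)"
    by (rule eqI(2)) (rule eigenbasis_spectral_parts_unique[OF E])
qed

lemma op_norm_pos_part_eigenbasis:
  assumes E: "eigenbasis A E l" and "e0 \<in> E" "\<And>e. e \<in> E \<Longrightarrow> l e \<le> l e0"
  shows "op_norm (pos_part A) = max (l e0) 0"
  unfolding pos_neg_part_eigenbasis[OF E]
  by (rule op_norm_spectral_matrix[OF eigenbasisD(1)[OF E]])
    (use assms in \<open>force simp: max_def\<close>)+

lemma op_norm_neg_part_eigenbasis:
  assumes E: "eigenbasis A E l" and "e1 \<in> E" "\<And>e. e \<in> E \<Longrightarrow> l e1 \<le> l e"
  shows "op_norm (neg_part A) = max (- l e1) 0"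
  unfolding pos_neg_part_eigenbasis[OF E]
  by (rule op_norm_spectral_matrix[OF eigenbasisD(1)[OF E]])
    (use assms in \<open>force simp: max_def\<close>)+

section \<open>Indefinite Hermitian matrices\<close>

lemma eigenbasis_Re_quad_form:
  "eigenbasis A E l \<Longrightarrow> Re (quad_form A v) = (\<Sum>e\<in>E. l e * (cmod (cinner e v))^2)"
  by (subst eigenbasis_spectral_decomposition) (auto simp: quad_form_spectral_matrix)

lemma eigenbasis_Re_quad_form_bounds:
  assumes E: "eigenbasis A E l" and bounds: "\<And>e. e \<in> E \<Longrightarrow> m \<le> l e \<and> l e \<le> M"
  shows "m * norm v ^ 2 \<le> Re (quad_form A v)" and "Re (quad_form A v) \<le> M * norm v ^ 2"
proof -
  have "(\<Sum>e\<in>E. m * (cmod (cinner e v))^2) \<le> (\<Sum>e\<in>E. l e * (cmod (cinner e v))^2)"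
    "(\<Sum>e\<in>E. l e * (cmod (cinner e v))^2) \<le> (\<Sum>e\<in>E. M * (cmod (cinner e v))^2)"
    using bounds by (auto intro!: sum_mono mult_right_mono)
  then show "m * norm v ^ 2 \<le> Re (quad_form A v)" "Re (quad_form A v) \<le> M * norm v ^ 2"
    by (simp_all add: eigenbasis_Re_quad_form[OF E] parseval[OF eigenbasisD(1)[OF E]]
        sum_distrib_left)
qed

lemma eigenbasis_extreme_eigenvalues:
  assumes "eigenbasis A E l"
  obtains e0 e1 where "e0 \<in> E" "e1 \<in> E" "\<And>e. e \<in> E \<Longrightarrow> l e1 \<le> l e \<and> l e \<le> l e0"
proof -
  have "finite E" "E \<noteq> {}"
    using orthonormal_basisD(1) orthonormal_basis_nonempty eigenbasisD(1)[OF assms] by auto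
  then obtain e0 e1
    where "is_arg_min (\<lambda>e. - l e) (\<lambda>e. e \<in> E) e0" "is_arg_min l (\<lambda>e. e \<in> E) e1"
    using ex_is_arg_min_if_finite by metis
  then show ?thesis by (intro that[of e0 e1]) (auto simp: is_arg_min_linorder)
qed

lemma uminus_matrix_vector_mult: "(- M) *v v = - (M *v (v::complex^'n))"
  by (simp add: vec_eq_iff matrix_vector_mult_def sum_negf)

lemma eigenbasis_uminus:
  assumes "eigenbasis A E l"
  shows "eigenbasis (- A) E (\<lambda>e. - l e)"
proof -
  have "(- A) *v e = complex_of_real (- l e) *s e" if "e \<in> E" for e
    using eigenbasisD(2)[OF assms that] by (simp add: uminus_matrix_vector_mult)
  then show ?thesis using eigenbasisD(1)[OF assms] unfolding eigenbasis_def by blast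
qed

lemma eigenbasis_psd: "eigenbasis A E l \<Longrightarrow> (\<And>e. e \<in> E \<Longrightarrow> 0 \<le> l e) \<Longrightarrow> psd A"
  by (metis eigenbasis_spectral_decomposition psd_spectral_matrix)

theorem indefinite_hermitian_extreme_eigenvectors:
  fixes A :: "complex^'n^'n"
  assumes herm: "hermitian A" and "\<not> psd A" and "\<not> psd (- A)"
  obtains u w where "norm u = 1" "A *v u = complex_of_real (op_norm (pos_part A)) *s u"
    and "norm w = 1" "A *v w = complex_of_real (- op_norm (neg_part A)) *s w"
    and "op_norm (pos_part A) > 0" "op_norm (neg_part A) > 0"
    and "\<And>v. - op_norm (neg_part A) * norm v ^ 2 \<le> Re (quad_form A v)"
    and "\<And>v. Re (quad_form A v) \<le> op_norm (pos_part A) * norm v ^ 2"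
proof -
  obtain E l where E: "eigenbasis A E l" by (rule hermitian_eigenbasis_exists[OF herm])
  obtain e0 e1 where e0: "e0 \<in> E" and e1: "e1 \<in> E"
    and bounds: "\<And>e. e \<in> E \<Longrightarrow> l e1 \<le> l e \<and> l e \<le> l e0"
    using eigenbasis_extreme_eigenvalues[OF E] by blast
  have "l e0 > 0"
  proof (rule ccontr)
    assume "\<not> l e0 > 0"
    then have "psd (- A)"
      using bounds by (intro eigenbasis_psd[OF eigenbasis_uminus[OF E]]) fastforce
    with \<open>\<not> psd (- A)\<close> show False ..
  qed
  have "l e1 < 0"
  proof (rule ccontr)
    assume "\<not> l e1 < 0"
    then have "psd A" using bounds by (intro eigenbasis_psd[OF E]) fastforce
    with \<open>\<not> psd A\<close> show False ..
  qed
  have pos: "op_norm (pos_part A) = l e0"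
    using op_norm_pos_part_eigenbasis[OF E e0] bounds \<open>l e0 > 0\<close> by simp
  have neg: "op_norm (neg_part A) = - l e1"
    using op_norm_neg_part_eigenbasis[OF E e1] bounds \<open>l e1 < 0\<close> by simp
  show ?thesis
  proof (rule that[of e0 e1])
    show "norm e0 = 1" "norm e1 = 1"
      using norm_orthonormal[OF orthonormal_basisD(2)[OF eigenbasisD(1)[OF E]]] e0 e1 by auto
    show "A *v e0 = complex_of_real (op_norm (pos_part A)) *s e0"
      "A *v e1 = complex_of_real (- op_norm (neg_part A)) *s e1"
      using eigenbasisD(2)[OF E] e0 e1 by (simp_all add: pos neg)
    show "op_norm (pos_part A) > 0" "op_norm (neg_part A) > 0"
      using pos neg \<open>l e0 > 0\<close> \<open>l e1 < 0\<close> by simp_all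
    show "- op_norm (neg_part A) * norm v ^ 2 \<le> Re (quad_form A v)"
      "Re (quad_form A v) \<le> op_norm (pos_part A) * norm v ^ 2" for v
      using eigenbasis_Re_quad_form_bounds[OF E bounds] by (simp_all add: pos neg)
  qed
qed

section \<open>Constructing the positive unital maps\<close>

lemma scaleR_interpolation_identities:
  fixes X I :: "'a::real_vector"
  assumes "a + b \<noteq> 0"
  defines "c \<equiv> 1 / (a + b)"
  shows "c *\<^sub>R (X + b *\<^sub>R I) + c *\<^sub>R (a *\<^sub>R I - X) = I"
    and "a *\<^sub>R c *\<^sub>R (X + b *\<^sub>R I) - b *\<^sub>R c *\<^sub>R (a *\<^sub>R I - X) = X"
proof -
  have "c *\<^sub>R (X + b *\<^sub>R I) + c *\<^sub>R (a *\<^sub>R I - X) = c *\<^sub>R ((a + b) *\<^sub>R I)"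
    by (simp add: algebra_simps)
  then show "c *\<^sub>R (X + b *\<^sub>R I) + c *\<^sub>R (a *\<^sub>R I - X) = I"
    using assms by simp
  have "a *\<^sub>R c *\<^sub>R (X + b *\<^sub>R I) - b *\<^sub>R c *\<^sub>R (a *\<^sub>R I - X) = c *\<^sub>R ((a + b) *\<^sub>R X)"
    by (simp add: algebra_simps)
  then show "a *\<^sub>R c *\<^sub>R (X + b *\<^sub>R I) - b *\<^sub>R c *\<^sub>R (a *\<^sub>R I - X) = X"
    using assms by simp
qed

lemma positive_unital_map_vector_states:
  assumes "norm u = 1" "norm w = 1" "psd Q1" "psd Q2" "Q1 + Q2 = mat 1"
  shows "positive_unital_map (\<lambda>X. Re (quad_form X u) *\<^sub>R Q1 + Re (quad_form X w) *\<^sub>R Q2)"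
proof -
  have "hermitian Q1" "hermitian Q2" using assms(3,4) by (simp_all add: psd_def)
  moreover have "psd (Re (quad_form X u) *\<^sub>R Q1 + Re (quad_form X w) *\<^sub>R Q2)" if "psd X" for X
    using that assms(3,4) by (intro psd_add psd_scaleR) (simp_all add: psd_iff_Re_quad_form)
  moreover have "quad_form (mat 1) u = 1" "quad_form (mat 1) w = 1"
    using assms(1,2) by (simp_all add: quad_form_mat_1)
  ultimately show ?thesis
    unfolding positive_unital_map_def
    by (simp add: hermitian_add hermitian_scaleR quad_form_add quad_form_scaleR
        scaleR_add_left scaleR_add_right assms(5))
qed

lemma positive_unital_map_eigenvectors:
  fixes A :: "complex^'n^'n" and B :: "complex^'k^'k"
  assumes "hermitian B" and u: "norm u = 1" "A *v u = complex_of_real a *s u"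
    and w: "norm w = 1" "A *v w = complex_of_real (- b) *s w" and "0 < a + b"
    and bounds: "\<And>v. - b * norm v ^ 2 \<le> Re (quad_form B v)"
      "\<And>v. Re (quad_form B v) \<le> a * norm v ^ 2"
  shows "\<exists>\<Phi>. positive_unital_map \<Phi> \<and> \<Phi> A = B"
proof -
  define Q1 where "Q1 = (1 / (a + b)) *\<^sub>R (B + b *\<^sub>R mat 1)"
  define Q2 where "Q2 = (1 / (a + b)) *\<^sub>R (a *\<^sub>R mat 1 - B)"
  have "Re (quad_form (B + b *\<^sub>R mat 1) v) = Re (quad_form B v) + b * norm v ^ 2"
    "Re (quad_form (a *\<^sub>R mat 1 - B) v) = a * norm v ^ 2 - Re (quad_form B v)" for v
    by (simp_all add: quad_form_add quad_form_diff quad_form_scaleR quad_form_mat_1)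
  moreover have "0 \<le> Re (quad_form B v) + b * norm v ^ 2"
    "0 \<le> a * norm v ^ 2 - Re (quad_form B v)" for v
    using bounds[of v] by linarith+
  ultimately have "psd (B + b *\<^sub>R mat 1)" "psd (a *\<^sub>R mat 1 - B)"
    using \<open>hermitian B\<close>
    by (simp_all add: psd_iff_Re_quad_form hermitian_add hermitian_diff hermitian_scaleR
        hermitian_mat_1)
  then have "psd Q1" "psd Q2"
    unfolding Q1_def Q2_def using \<open>0 < a + b\<close> by (simp_all add: psd_scaleR)
  moreover have "Q1 + Q2 = mat 1" "a *\<^sub>R Q1 - b *\<^sub>R Q2 = B"
    unfolding Q1_def Q2_def
    by (rule scaleR_interpolation_identities; use \<open>0 < a + b\<close> in simp)+
  moreover have "quad_form A u = a" "quad_form A w = - b"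
    using u w by (simp_all add: quad_form_cinner cinner_minus_right cinner_smult_right cinner_self)
  ultimately show ?thesis
    using positive_unital_map_vector_states[OF u(1) w(1)] by fastforce
qed

lemma positive_unital_map_between_indefinite:
  fixes A :: "complex^'n^'n" and B :: "complex^'k^'k"
  assumes "hermitian A" "\<not> psd A" "\<not> psd (- A)" "hermitian B" "\<not> psd B" "\<not> psd (- B)"
    and "op_norm (pos_part A) = op_norm (pos_part B)"
    and "op_norm (neg_part A) = op_norm (neg_part B)"
  shows "\<exists>\<Phi>. positive_unital_map \<Phi> \<and> \<Phi> A = B"
proof -
  obtain u w where u: "norm u = 1" "A *v u = complex_of_real (op_norm (pos_part A)) *s u"
    and w: "norm w = 1" "A *v w = complex_of_real (- op_norm (neg_part A)) *s w"
    and "op_norm (pos_part A) > 0" "op_norm (neg_part A) > 0"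
    using indefinite_hermitian_extreme_eigenvectors[OF assms(1-3)] by metis
  moreover obtain "\<And>v. - op_norm (neg_part B) * norm v ^ 2 \<le> Re (quad_form B v)"
    and "\<And>v. Re (quad_form B v) \<le> op_norm (pos_part B) * norm v ^ 2"
    using indefinite_hermitian_extreme_eigenvectors[OF assms(4-6)] by metis
  ultimately show ?thesis
    by (intro positive_unital_map_eigenvectors[OF \<open>hermitian B\<close> u w])
      (simp_all add: assms(7,8))
qed

theorem mainTheorem8:
  fixes A :: "complex^'n^'n" and B :: "complex^'k^'k"
  assumes "hermitian A" and "hermitian B"
    and "\<not> psd A" and "\<not> psd (- A)"
    and "\<not> psd B" and "\<not> psd (- B)"
    and "op_norm (pos_part A) = op_norm (pos_part B)"
    and "op_norm (neg_part A) = op_norm (neg_part B)"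
  shows "(\<exists>\<Phi> :: complex^'n^'n \<Rightarrow> complex^'k^'k. positive_unital_map \<Phi> \<and> \<Phi> A = B) \<and>
         (\<exists>\<Phi>' :: complex^'k^'k \<Rightarrow> complex^'n^'n. positive_unital_map \<Phi>' \<and> \<Phi>' B = A)"
  using positive_unital_map_between_indefinite[OF assms(1,3,4,2,5,6,7,8)]
    positive_unital_map_between_indefinite[OF assms(2,5,6,1,3,4) assms(7,8)[symmetric]]
  by blast

end
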